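(* Let $p$ be an odd prime and $n,k$ positive integers with $\gcd(n,k)=s$. If $n/s$ is odd, then $\gcd(p^n-1,d)=1$ for $d=(p^{2k}+1)/2$ and for $d=p^{2k}-p^k+1$. *)

theory Defs
  imports "HOL-Computational_Algebra.Primes"
begin

end

theory Submission
  imports Defs "HOL-Number_Theory.Number_Theory"
begin

text \<open>
  If \<open>g\<close> divides both \<open>p\<^sup>n - 1\<close> and \<open>p\<^bsup>mk\<^esup> + 1\<close>, then the order of \<open>p\<close> modulo \<open>g\<close>
  divides \<open>n\<close> and \<open>2mk\<close>, hence \<open>m \<cdot> gcd n (2k)\<close>. Oddness of \<open>n / gcd n k\<close> makes
  \<open>gcd n (2k) = gcd n k\<close>, a divisor of \<open>k\<close>, so \<open>p\<^bsup>mk\<^esup> \<equiv> 1\<close> and \<open>g\<close> divides \<open>2\<close>.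
  Both numbers \<open>d\<close> are odd divisors of such a \<open>p\<^bsup>mk\<^esup> + 1\<close>: \<open>2d = p\<^bsup>2k\<^esup> + 1\<close> in the
  first case, and \<open>(p\<^sup>k + 1) d = p\<^bsup>3k\<^esup> + 1\<close> in the second.
\<close>

lemma gcd_double_right_eq:
  fixes n k :: nat
  assumes "odd (n div gcd n k)"
  shows "gcd n (2 * k) = gcd n k"
proof -
  define s where "s = gcd n k"
  have "s \<noteq> 0"
    using assms by (cases "n = 0") (auto simp: s_def)
  then have "coprime (n div s) (k div s)"
    unfolding s_def by (intro div_gcd_coprime) simp
  with assms have "coprime (n div s) (2 * (k div s))"
    by (simp add: s_def)
  have "gcd n (2 * k) = gcd (s * (n div s)) (s * (2 * (k div s)))"
    by (simp add: s_def mult.left_commute[of _ 2])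
  also have "\<dots> = s * gcd (n div s) (2 * (k div s))"
    by (rule gcd_mult_distrib_nat[symmetric])
  finally show ?thesis
    using \<open>coprime (n div s) (2 * (k div s))\<close> by (simp add: s_def)
qed

lemma dvd_two_if_dvd_pow_plus_one:
  fixes a g n k m :: nat
  assumes pow_n: "[a ^ n = 1] (mod g)"
    and dvd_plus: "g dvd a ^ (m * k) + 1"
    and odd_quot: "odd (n div gcd n k)"
  shows "g dvd 2"
proof -
  have "int g dvd int (a ^ (m * k) + 1)"
    using dvd_plus by (simp only: int_dvd_int_iff)
  then have "[int (a ^ (m * k)) = -1] (mod int g)"
    by (simp add: cong_iff_dvd_diff add.commute)
  then have "[int (a ^ (m * k)) ^ 2 = (-1) ^ 2] (mod int g)"
    by (rule cong_pow)
  then have "[a ^ (2 * (m * k)) = 1] (mod g)"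
    by (simp add: power_mult mult.commute flip: cong_int_iff)
  with pow_n have "ord g a dvd gcd n (2 * (m * k))"
    by (simp add: ord_divides')
  also have "\<dots> dvd gcd (m * n) (m * (2 * k))"
    by (intro gcd_greatest) (simp_all add: ac_simps)
  also have "\<dots> = m * gcd n k"
    using gcd_double_right_eq[OF odd_quot] by (simp flip: gcd_mult_distrib_nat)
  also have "\<dots> dvd m * k"
    by simp
  finally have "[a ^ (m * k) = 1] (mod g)"
    by (simp add: ord_divides')
  then have "[a ^ (m * k) + 1 = 1 + 1] (mod g)"
    by (rule cong_add) simp
  with dvd_plus show ?thesis
    using cong_dvd_iff by (metis one_add_one)
qed

lemma coprime_pow_minus_one_if_dvd_pow_plus_one:
  fixes a d n k m :: nat
  assumes "a > 0" and "odd d" and "d dvd a ^ (m * k) + 1"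
    and "odd (n div gcd n k)"
  shows "gcd (a ^ n - 1) d = 1"
proof -
  define g where "g = gcd (a ^ n - 1) d"
  have "[a ^ n = 1] (mod g)"
    using \<open>a > 0\<close> by (simp add: g_def cong_altdef_nat Suc_le_eq)
  moreover have "g dvd a ^ (m * k) + 1"
    using assms(3) by (simp add: g_def dvd_trans[of _ d])
  ultimately have "g dvd 2"
    using assms(4) by (rule dvd_two_if_dvd_pow_plus_one)
  then have "g \<le> 2"
    by (rule dvd_imp_le) simp
  moreover have "odd g"
    using \<open>odd d\<close> by (auto simp: g_def dest: dvd_trans[of 2 _ d])
  ultimately show ?thesis
    unfolding g_def[symmetric] by presburger
qed

lemma odd_square_plus_one_half:
  fixes x :: nat
  assumes "odd x"
  shows "odd ((x ^ 2 + 1) div 2)"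
proof -
  obtain t where "x = 2 * t + 1"
    using assms oddE by blast
  then have "x ^ 2 + 1 = 2 * (2 * (t * t + t) + 1)"
    by (simp add: power2_eq_square algebra_simps)
  then show ?thesis
    by simp
qed

lemma odd_square_minus_plus_one:
  fixes x :: nat
  shows "odd (x ^ 2 - x + 1)"
proof -
  have "x ^ 2 - x = x * (x - 1)"
    by (simp add: power2_eq_square diff_mult_distrib2)
  then show ?thesis
    by (cases "even x") auto
qed

lemma square_minus_plus_one_dvd_cube_plus_one:
  fixes x :: nat
  shows "x ^ 2 - x + 1 dvd x ^ 3 + 1"
proof
  have "x \<le> x ^ 2"
    by (simp add: power2_eq_square)
  then show "x ^ 3 + 1 = (x ^ 2 - x + 1) * (x + 1)"
    by (simp add: power2_eq_square power3_eq_cube algebra_simps)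
qed

theorem mainTheorem4:
  fixes p n k s :: nat
  assumes "prime p" and "odd p" and "n > 0" and "k > 0"
    and "s = gcd n k" and "odd (n div s)"
  shows "gcd (p ^ n - 1) ((p ^ (2 * k) + 1) div 2) = 1
       \<and> gcd (p ^ n - 1) (p ^ (2 * k) - p ^ k + 1) = 1"
proof
  have "p > 0" and odd_quot: "odd (n div gcd n k)"
    using assms by (auto intro: odd_pos)
  have square: "p ^ (2 * k) = (p ^ k) ^ 2"
    by (simp add: power_mult[symmetric] mult.commute)
  have "even (p ^ (2 * k) + 1)"
    using \<open>odd p\<close> by simp
  then have "(p ^ (2 * k) + 1) div 2 dvd p ^ (2 * k) + 1"
    by (metis dvd_triv_right even_two_times_div_two)
  moreover have "odd ((p ^ (2 * k) + 1) div 2)"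
    unfolding square using \<open>odd p\<close> by (intro odd_square_plus_one_half) simp
  ultimately show "gcd (p ^ n - 1) ((p ^ (2 * k) + 1) div 2) = 1"
    using \<open>p > 0\<close> odd_quot by (intro coprime_pow_minus_one_if_dvd_pow_plus_one)
  have "p ^ (2 * k) - p ^ k + 1 dvd p ^ (3 * k) + 1"
    using square_minus_plus_one_dvd_cube_plus_one[of "p ^ k"]
    by (simp only: square power_mult[symmetric] mult.commute)
  moreover have "odd (p ^ (2 * k) - p ^ k + 1)"
    unfolding square by (rule odd_square_minus_plus_one)
  ultimately show "gcd (p ^ n - 1) (p ^ (2 * k) - p ^ k + 1) = 1"
    using \<open>p > 0\<close> odd_quot by (intro coprime_pow_minus_one_if_dvd_pow_plus_one)
qed

end
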